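(* Let $n\le N$ and let $\boldsymbol A$ be an $n\times N$ random matrix with independent entries, each equal to $1$ with probability $p$ and to $-\tilde\sigma_p^2=-p/(1-p)$ with probability $1-p$, where $p$ is bounded away from $1$ and $n\ge C_0\log N$ for a sufficiently large constant $C_0$. Let $n_j$ be the number of entries equal to $1$ in column $j$ of $\boldsymbol A$, and define $\tilde{\boldsymbol A}$ by $\tilde A_{ij}=1$ if $A_{ij}=1$ and $\tilde A_{ij}=-n_j/(n-n_j)$ if $A_{ij}=-\tilde\sigma_p^2$. Then there are constants $c_1,c_2>0$ such that $$ \Pr\left(\|\boldsymbol A-\tilde{\boldsymbol A}\|\ge c_1\max\left\{\sqrt{\tilde\sigma_p^2N}\log N,\ (\log N)^{3/2}\right\}\right)\le c_2N^{-5}. $$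
   Context: $\|\cdot\|$ denotes the spectral norm. Parameters $n,p$ may depend on $N$; constants are independent of $N$. (If $n_j=n$ the column of $\tilde{\boldsymbol A}$ has no entries of the second type, so the definition is well posed.) *)

theory Defs
  imports "HOL-Probability.Probability"
begin

definition spec_norm :: "nat \<Rightarrow> nat \<Rightarrow> (nat \<Rightarrow> nat \<Rightarrow> real) \<Rightarrow> real" where
  "spec_norm m k M = Sup {sqrt (\<Sum>i<m. (\<Sum>j<k. M i j * x j)^2) | x. (\<Sum>j<k. (x j)^2) \<le> 1}"

text \<open>Random sign pattern: omega (i,j) = True iff entry A_ij equals 1 (probability p).\<close>
definition pattern_pmf :: "nat \<Rightarrow> nat \<Rightarrow> real \<Rightarrow> (nat \<times> nat \<Rightarrow> bool) pmf" where
  "pattern_pmf n N p = Pi_pmf ({..<n} \<times> {..<N}) False (\<lambda>_. bernoulli_pmf p)"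

definition sigma2 :: "real \<Rightarrow> real" where
  "sigma2 p = p / (1 - p)"

definition matA :: "real \<Rightarrow> (nat \<times> nat \<Rightarrow> bool) \<Rightarrow> nat \<Rightarrow> nat \<Rightarrow> real" where
  "matA p \<omega> i j = (if \<omega> (i, j) then 1 else - sigma2 p)"

definition col_count :: "nat \<Rightarrow> (nat \<times> nat \<Rightarrow> bool) \<Rightarrow> nat \<Rightarrow> nat" where
  "col_count n \<omega> j = card {i. i < n \<and> \<omega> (i, j)}"

definition matAt :: "nat \<Rightarrow> (nat \<times> nat \<Rightarrow> bool) \<Rightarrow> nat \<Rightarrow> nat \<Rightarrow> real" where
  "matAt n \<omega> i j = (if \<omega> (i, j) then 1
     else - real (col_count n \<omega> j) / (real n - real (col_count n \<omega> j)))"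

end

theory Submission
  imports Defs
begin

text \<open>The matrix \<open>matA - matAt\<close> vanishes at the entries equal to \<open>1\<close> and depends otherwise only on the
  column counts \<open>n\<^sub>j\<close>, each binomially distributed with parameters \<open>n, p\<close>. By multiplicative
  Chernoff bounds, outside an event of probability \<open>O(N\<^sup>-\<^sup>5)\<close> every column satisfies
  \<open>|n\<^sub>j - np| \<lesssim> \<surd>(np log N) + log N\<close> and \<open>n\<^sub>j < np + n(1 - p)/2\<close> (here \<open>n \<gtrsim> log N\<close> is used),
  and the total number of ones is \<open>\<lesssim> nNp + log N\<close>. On that event already the Frobenius norm,
  which dominates the spectral norm, is small:
  \<open>\<parallel>matA - matAt\<parallel>\<^sub>F\<^sup>2 \<lesssim> (1-p)\<^sup>-\<^sup>4 n\<^sup>-\<^sup>1 \<Sum>\<^sub>j (n\<^sub>j - np)\<^sup>2 \<lesssim> (1-p)\<^sup>-\<^sup>4 (Np log N + log\<^sup>2 N)\<close>, and \<open>p \<le> sigma2 p\<close>.\<close>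

section \<open>Chernoff bounds for the binomial distribution\<close>

lemma binomial_prob_le_exp_moment:
  assumes p: "0 \<le> p" "p \<le> 1"
  shows "measure_pmf.prob (binomial_pmf m p) {k. b \<le> l * real k} \<le> exp (real m * p * (exp l - 1) - b)"
proof -
  let ?S = "{k. b \<le> l * real k}"
  have "measure_pmf.prob (binomial_pmf m p) ?S = measure_pmf.prob (binomial_pmf m p) (?S \<inter> {..m})"
    by (rule measure_prob_cong_0) (use p in auto)
  also have "\<dots> = (\<Sum>k\<in>?S \<inter> {..m}. pmf (binomial_pmf m p) k)"
    by (rule measure_measure_pmf_finite) auto
  also have "\<dots> \<le> (\<Sum>k\<in>?S \<inter> {..m}. pmf (binomial_pmf m p) k * exp (l * real k - b))"
  proof (rule sum_mono)
    fix k assume "k \<in> ?S \<inter> {..m}"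
    hence "1 \<le> exp (l * real k - b)" by simp
    thus "pmf (binomial_pmf m p) k \<le> pmf (binomial_pmf m p) k * exp (l * real k - b)"
      using mult_left_mono[of 1 _ "pmf (binomial_pmf m p) k"] by simp
  qed
  also have "\<dots> \<le> (\<Sum>k\<le>m. pmf (binomial_pmf m p) k * exp (l * real k - b))"
    by (rule sum_mono2) auto
  also have "\<dots> = exp (- b) * (\<Sum>k\<le>m. real (m choose k) * (p * exp l)^k * (1 - p)^(m - k))"
    using p unfolding sum_distrib_left
    by (intro sum.cong refl)
       (simp add: exp_diff exp_minus power_mult_distrib field_simps flip: exp_of_nat_mult)
  also have "(\<Sum>k\<le>m. real (m choose k) * (p * exp l)^k * (1 - p)^(m - k)) = (p * exp l + (1 - p))^m"
    by (subst binomial_ring) (simp add: atLeast0AtMost)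
  also have "\<dots> \<le> exp (p * (exp l - 1)) ^ m"
  proof (rule power_mono)
    show "p * exp l + (1 - p) \<le> exp (p * (exp l - 1))"
      using exp_ge_add_one_self[of "p * (exp l - 1)"] by (simp add: algebra_simps)
    show "0 \<le> p * exp l + (1 - p)" using p by simp
  qed
  also have "exp (p * (exp l - 1)) ^ m = exp (real m * p * (exp l - 1))"
    by (simp flip: exp_of_nat_mult add: mult.assoc)
  finally have "measure_pmf.prob (binomial_pmf m p) ?S \<le> exp (- b) * exp (real m * p * (exp l - 1))"
    by simp
  also have "\<dots> = exp (real m * p * (exp l - 1) - b)"
    by (simp flip: exp_add)
  finally show ?thesis .
qed

lemma binomial_upper_tail:
  assumes p: "0 \<le> p" "p \<le> 1" and mu: "real m * p > 0" and t: "t \<ge> 0"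
  shows "measure_pmf.prob (binomial_pmf m p) {k. real m * p + t \<le> real k}
           \<le> exp (- min (t\<^sup>2 / (4 * (real m * p))) (t / 2))"
proof (cases "t \<le> 2 * (real m * p)")
  case True
  define \<mu> where "\<mu> = real m * p"
  define l where "l = t / (2 * \<mu>)"
  have l0: "0 \<le> l" and l1: "l \<le> 1" using True mu t by (auto simp: l_def \<mu>_def field_simps)
  have "{k. real m * p + t \<le> real k} \<subseteq> {k. l * (real m * p + t) \<le> l * real k}"
    using l0 by (auto intro: mult_left_mono)
  hence "measure_pmf.prob (binomial_pmf m p) {k. real m * p + t \<le> real k}
      \<le> measure_pmf.prob (binomial_pmf m p) {k. l * (real m * p + t) \<le> l * real k}"
    by (intro measure_pmf.finite_measure_mono) auto
  also have "\<dots> \<le> exp (real m * p * (exp l - 1) - l * (real m * p + t))"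
    by (rule binomial_prob_le_exp_moment[OF p])
  also have "\<dots> \<le> exp (\<mu> * l\<^sup>2 - l * t)"
  proof -
    have "exp l - 1 \<le> l + l\<^sup>2" using exp_bound[OF l0 l1] by simp
    hence "\<mu> * (exp l - 1) \<le> \<mu> * (l + l\<^sup>2)" using mu by (intro mult_left_mono) (auto simp: \<mu>_def)
    thus ?thesis by (simp add: \<mu>_def algebra_simps)
  qed
  also have "\<mu> * l\<^sup>2 - l * t = - (t\<^sup>2 / (4 * \<mu>))"
    using mu by (simp add: l_def \<mu>_def field_simps power2_eq_square)
  also have "exp (- (t\<^sup>2 / (4 * \<mu>))) \<le> exp (- min (t\<^sup>2 / (4 * (real m * p))) (t / 2))"
    by (simp add: \<mu>_def)
  finally show ?thesis .
next
  case False
  have "measure_pmf.prob (binomial_pmf m p) {k. real m * p + t \<le> real k}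
      = measure_pmf.prob (binomial_pmf m p) {k. 1 * (real m * p + t) \<le> 1 * real k}" by simp
  also have "\<dots> \<le> exp (real m * p * (exp 1 - 1) - 1 * (real m * p + t))"
    by (rule binomial_prob_le_exp_moment[OF p])
  also have "\<dots> \<le> exp (- (t / 2))"
  proof -
    have "exp (1::real) \<le> 3" using exp_le by simp
    hence "real m * p * (exp 1 - 1) \<le> real m * p * 2" using mu by (intro mult_left_mono) auto
    thus ?thesis using False by simp
  qed
  also have "\<dots> \<le> exp (- min (t\<^sup>2 / (4 * (real m * p))) (t / 2))" by simp
  finally show ?thesis .
qed

lemma binomial_lower_tail:
  assumes p: "0 \<le> p" "p \<le> 1" and mu: "real m * p > 0" and t: "t \<ge> 0"
  shows "measure_pmf.prob (binomial_pmf m p) {k. real k \<le> real m * p - t}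
           \<le> exp (- (t\<^sup>2 / (4 * (real m * p))))"
proof -
  define \<mu> where "\<mu> = real m * p"
  define l where "l = t / (2 * \<mu>)"
  have l0: "0 \<le> l" using mu t by (auto simp: l_def \<mu>_def)
  have "{k. real k \<le> real m * p - t} \<subseteq> {k. (- l) * (real m * p - t) \<le> (- l) * real k}"
    using l0 by (auto intro: mult_left_mono)
  hence "measure_pmf.prob (binomial_pmf m p) {k. real k \<le> real m * p - t}
      \<le> measure_pmf.prob (binomial_pmf m p) {k. (- l) * (real m * p - t) \<le> (- l) * real k}"
    by (intro measure_pmf.finite_measure_mono) auto
  also have "\<dots> \<le> exp (real m * p * (exp (- l) - 1) - (- l) * (real m * p - t))"
    by (rule binomial_prob_le_exp_moment[OF p])
  also have "\<dots> \<le> exp (\<mu> * l\<^sup>2 - l * t)"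
  proof -
    have "1 + l \<le> exp l" by (rule exp_ge_add_one_self)
    hence "exp (- l) \<le> 1 / (1 + l)" using l0 by (simp add: exp_minus field_simps)
    also have "\<dots> \<le> 1 - l + l\<^sup>2" using l0 by (simp add: field_simps power2_eq_square)
    finally have "exp (- l) - 1 \<le> - l + l\<^sup>2" by simp
    hence "\<mu> * (exp (- l) - 1) \<le> \<mu> * (- l + l\<^sup>2)" using mu by (intro mult_left_mono) (auto simp: \<mu>_def)
    thus ?thesis by (simp add: \<mu>_def algebra_simps)
  qed
  also have "\<mu> * l\<^sup>2 - l * t = - (t\<^sup>2 / (4 * \<mu>))"
    using mu by (simp add: l_def \<mu>_def field_simps power2_eq_square)
  finally show ?thesis by (simp add: \<mu>_def)
qed

section \<open>The spectral norm and the random pattern\<close>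

lemma spec_norm_le_frobenius:
  "spec_norm m k M \<le> sqrt (\<Sum>i<m. \<Sum>j<k. (M i j)\<^sup>2)"
  unfolding spec_norm_def
proof (rule cSup_least)
  show "{sqrt (\<Sum>i<m. (\<Sum>j<k. M i j * x j)\<^sup>2) |x. (\<Sum>j<k. (x j)\<^sup>2) \<le> 1} \<noteq> {}"
  proof -
    have "sqrt (\<Sum>i<m. (\<Sum>j<k. M i j * (\<lambda>_. 0::real) j)\<^sup>2) \<in> {sqrt (\<Sum>i<m. (\<Sum>j<k. M i j * x j)\<^sup>2) |x. (\<Sum>j<k. (x j)\<^sup>2) \<le> 1}"
      by (rule CollectI, rule exI[of _ "\<lambda>_. 0"]) simp
    thus ?thesis by blast
  qed
next
  fix y assume "y \<in> {sqrt (\<Sum>i<m. (\<Sum>j<k. M i j * x j)\<^sup>2) |x. (\<Sum>j<k. (x j)\<^sup>2) \<le> 1}"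
  then obtain x where y: "y = sqrt (\<Sum>i<m. (\<Sum>j<k. M i j * x j)\<^sup>2)" and x: "(\<Sum>j<k. (x j)\<^sup>2) \<le> 1"
    by blast
  have "(\<Sum>i<m. (\<Sum>j<k. M i j * x j)\<^sup>2) \<le> (\<Sum>i<m. \<Sum>j<k. (M i j)\<^sup>2)"
  proof (rule sum_mono)
    fix i
    have "(\<Sum>j<k. M i j * x j)\<^sup>2 \<le> (\<Sum>j<k. (M i j)\<^sup>2) * (\<Sum>j<k. (x j)\<^sup>2)"
      by (rule Cauchy_Schwarz_ineq_sum)
    also have "\<dots> \<le> (\<Sum>j<k. (M i j)\<^sup>2) * 1"
      using x by (intro mult_left_mono) (auto intro: sum_nonneg)
    finally show "(\<Sum>j<k. M i j * x j)\<^sup>2 \<le> (\<Sum>j<k. (M i j)\<^sup>2)" by simp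
  qed
  thus "y \<le> sqrt (\<Sum>i<m. \<Sum>j<k. (M i j)\<^sup>2)" using y by simp
qed

lemma prob_col_count:
  assumes "j < N" "0 \<le> p" "p \<le> 1"
  shows "measure_pmf.prob (pattern_pmf n N p) {\<omega>. P (real (col_count n \<omega> j))}
       = measure_pmf.prob (binomial_pmf n p) {k. P (real k)}"
proof -
  let ?col = "{..<n} \<times> {j}" and ?all = "{..<n} \<times> {..<N}"
  have "binomial_pmf n p = map_pmf (\<lambda>f. card {x\<in>?col. f x}) (Pi_pmf ?col False (\<lambda>_. bernoulli_pmf p))"
    by (rule binomial_pmf_altdef') (use assms in \<open>auto simp: card_cartesian_product\<close>)
  also have "Pi_pmf ?col False (\<lambda>_. bernoulli_pmf p)
      = map_pmf (\<lambda>f x. if x \<in> ?col then f x else False) (Pi_pmf ?all False (\<lambda>_. bernoulli_pmf p))"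
    by (rule Pi_pmf_subset) (use assms in auto)
  also have "map_pmf (\<lambda>f. card {x\<in>?col. f x}) \<dots> = map_pmf (\<lambda>\<omega>. col_count n \<omega> j) (pattern_pmf n N p)"
    unfolding map_pmf_comp pattern_pmf_def
  proof (intro map_pmf_cong refl)
    fix \<omega> :: "nat \<times> nat \<Rightarrow> bool"
    have "{x \<in> ?col. if x \<in> ?col then \<omega> x else False} = (\<lambda>i. (i, j)) ` {i. i < n \<and> \<omega> (i, j)}"
      by auto
    also have "card \<dots> = col_count n \<omega> j"
      unfolding col_count_def by (rule card_image) (auto simp: inj_on_def)
    finally show "card {x \<in> ?col. if x \<in> ?col then \<omega> x else False} = col_count n \<omega> j" .
  qed
  finally show ?thesis by (simp add: vimage_def)
qed

lemma prob_card_pattern: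
  assumes "0 \<le> p" "p \<le> 1"
  shows "measure_pmf.prob (pattern_pmf n N p) {\<omega>. P (real (card {x\<in>{..<n} \<times> {..<N}. \<omega> x}))}
       = measure_pmf.prob (binomial_pmf (n * N) p) {k. P (real k)}"
proof -
  have "binomial_pmf (n * N) p = map_pmf (\<lambda>\<omega>. card {x\<in>{..<n} \<times> {..<N}. \<omega> x}) (pattern_pmf n N p)"
    unfolding pattern_pmf_def
    by (rule binomial_pmf_altdef') (use assms in \<open>auto simp: card_cartesian_product\<close>)
  thus ?thesis by (simp add: vimage_def)
qed

lemma sum_col_count:
  "(\<Sum>j<N. real (col_count n \<omega> j)) = real (card {x\<in>{..<n} \<times> {..<N}. \<omega> x})"
proof -
  have card_eq_sum: "real (card {x\<in>B. Q x}) = (\<Sum>x\<in>B. if Q x then 1 else 0)" if "finite B"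
    for B and Q :: "'a \<Rightarrow> bool"
    using that by (simp add: sum.If_cases Int_def)
  have "(\<Sum>j<N. real (col_count n \<omega> j)) = (\<Sum>j<N. \<Sum>i<n. if \<omega> (i, j) then 1 else 0)"
    unfolding col_count_def
    by (intro sum.cong refl) (subst card_eq_sum[symmetric]; simp add: lessThan_def conj_commute)
  also have "\<dots> = (\<Sum>i<n. \<Sum>j<N. if \<omega> (i, j) then 1 else 0)" by (rule sum.swap)
  also have "\<dots> = (\<Sum>x\<in>{..<n} \<times> {..<N}. if \<omega> x then 1 else 0)"
    by (simp add: sum.cartesian_product)
  also have "\<dots> = real (card {x\<in>{..<n} \<times> {..<N}. \<omega> x})" by (subst card_eq_sum) auto
  finally show ?thesis .
qed

section \<open>The estimate on the good event\<close>

text \<open>Off the ones, the entry of \<open>matA - matAt\<close> is \<open>n\<^sub>j/(n - n\<^sub>j) - p/(1 - p) = (n\<^sub>j - np)/((n - n\<^sub>j)(1 - p))\<close>,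
  and the hypothesis keeps \<open>n - n\<^sub>j\<close> above \<open>n(1 - p)/2\<close>.\<close>
lemma matA_minus_matAt_sq_le:
  assumes p: "0 < p" "p < 1"
    and col: "real (col_count n \<omega> j) < real n * p + real n * (1 - p) / 2"
  shows "(matA p \<omega> i j - matAt n \<omega> i j)\<^sup>2
           \<le> 4 * (real (col_count n \<omega> j) - real n * p)\<^sup>2 / (real n ^ 2 * (1 - p) ^ 4)"
proof (cases "\<omega> (i, j)")
  case True
  thus ?thesis by (simp add: matA_def matAt_def)
next
  case False
  define c where "c = real (col_count n \<omega> j)"
  define q where "q = 1 - p"
  have q: "0 < q" using p by (simp add: q_def)
  have gap: "real n - c > real n * q / 2"
    using col by (simp add: c_def q_def field_simps)
  have "real n > 0"
  proof (rule ccontr)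
    assume "\<not> real n > 0"
    hence "n = 0" by simp
    thus False using gap by (simp add: c_def)
  qed
  hence nq: "real n * q / 2 > 0" using q by simp
  hence "c < real n" using gap by linarith
  have "matA p \<omega> i j - matAt n \<omega> i j = c / (real n - c) - p / q"
    using False by (simp add: matA_def matAt_def sigma2_def c_def q_def)
  also have "\<dots> = (c - real n * p) / ((real n - c) * q)"
    using gap nq q by (simp add: field_simps q_def)
  finally have "(matA p \<omega> i j - matAt n \<omega> i j)\<^sup>2 = (c - real n * p)\<^sup>2 / ((real n - c)\<^sup>2 * q\<^sup>2)"
    by (simp add: power_divide power_mult_distrib)
  also have "\<dots> \<le> (c - real n * p)\<^sup>2 / ((real n * q / 2)\<^sup>2 * q\<^sup>2)"
  proof (rule divide_left_mono)
    show "(real n * q / 2)\<^sup>2 * q\<^sup>2 \<le> (real n - c)\<^sup>2 * q\<^sup>2"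
      using gap nq by (intro mult_right_mono power_mono) auto
    show "0 < (real n - c)\<^sup>2 * q\<^sup>2 * ((real n * q / 2)\<^sup>2 * q\<^sup>2)"
      using \<open>c < real n\<close> nq q by (intro mult_pos_pos zero_less_power) auto
  qed simp
  also have "\<dots> = 4 * (c - real n * p)\<^sup>2 / (real n ^ 2 * q ^ 4)"
    by (simp add: power2_eq_square field_simps power4_eq_xxxx)
  finally show ?thesis by (simp add: c_def q_def)
qed

text \<open>A Chernoff-size deviation \<open>\<sqrt>(\<mu>L) + L\<close> has square of order \<open>\<mu>L\<close> when \<open>\<mu> \<ge> L\<close>;
  otherwise its square is bounded linearly by \<open>c + \<mu>\<close>, which sums to the total count.\<close>
lemma square_deviation_le:
  fixes c \<mu> L :: real
  assumes "0 \<le> c" "0 \<le> \<mu>" "0 \<le> L" and dev: "\<bar>c - \<mu>\<bar> \<le> 12 * (sqrt (\<mu> * L) + L)"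
  shows "(c - \<mu>)\<^sup>2 \<le> 576 * \<mu> * L + 24 * L * (c + \<mu>)"
proof (cases "L \<le> \<mu>")
  case True
  have "L * L \<le> \<mu> * L" using True assms by (intro mult_right_mono)
  hence "L \<le> sqrt (\<mu> * L)" using assms by (simp add: real_le_rsqrt power2_eq_square)
  hence "\<bar>c - \<mu>\<bar> \<le> 24 * sqrt (\<mu> * L)" using dev by (simp add: distrib_left)
  hence "(c - \<mu>)\<^sup>2 \<le> (24 * sqrt (\<mu> * L))\<^sup>2"
    by (metis abs_ge_zero power2_abs power_mono)
  also have "\<dots> = 576 * \<mu> * L" using assms by (simp add: power_mult_distrib)
  finally show ?thesis using assms by (simp add: add_increasing2)
next
  case False
  have "\<mu> * L \<le> L * L" using False assms by (intro mult_right_mono) auto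
  hence "sqrt (\<mu> * L) \<le> sqrt (L * L)" by (rule real_sqrt_le_mono)
  hence "sqrt (\<mu> * L) \<le> L" using assms by simp
  hence "\<bar>c - \<mu>\<bar> \<le> 24 * L" using dev by (simp add: distrib_left)
  moreover have "\<bar>c - \<mu>\<bar> \<le> c + \<mu>" using assms by linarith
  ultimately have "\<bar>c - \<mu>\<bar> * \<bar>c - \<mu>\<bar> \<le> 24 * L * (c + \<mu>)"
    by (intro mult_mono) auto
  hence "(c - \<mu>)\<^sup>2 \<le> 24 * L * (c + \<mu>)"
    by (simp add: power2_eq_square)
  thus ?thesis using assms by (simp add: add_increasing)
qed

definition good_pattern :: "nat \<Rightarrow> nat \<Rightarrow> real \<Rightarrow> (nat \<times> nat \<Rightarrow> bool) \<Rightarrow> bool" where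
  "good_pattern n N p \<omega> \<longleftrightarrow>
     (\<forall>j<N. real (col_count n \<omega> j) < real n * p + real n * (1 - p) / 2 \<and>
       \<bar>real (col_count n \<omega> j) - real n * p\<bar> < 12 * (sqrt (real n * p * ln (real N)) + ln (real N))) \<and>
     real (card {x\<in>{..<n} \<times> {..<N}. \<omega> x}) < 2 * (real n * real N * p) + 12 * ln (real N)"

lemma sum_col_deviation_sq_le:
  assumes "good_pattern n N p \<omega>" "0 \<le> p" "1 \<le> N"
  shows "(\<Sum>j<N. (real (col_count n \<omega> j) - real n * p)\<^sup>2)
           \<le> 648 * real n * real N * p * ln (real N) + 288 * (ln (real N))\<^sup>2"
proof -
  define L where "L = ln (real N)"
  define T where "T = real (card {x\<in>{..<n} \<times> {..<N}. \<omega> x})"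
  have L: "0 \<le> L" using assms by (simp add: L_def)
  have "(\<Sum>j<N. (real (col_count n \<omega> j) - real n * p)\<^sup>2)
      \<le> (\<Sum>j<N. 576 * (real n * p) * L + 24 * L * (real (col_count n \<omega> j) + real n * p))"
    using assms L
    by (intro sum_mono square_deviation_le) (auto simp: good_pattern_def L_def less_imp_le)
  also have "\<dots> = 576 * real N * real n * p * L + 24 * L * ((\<Sum>j<N. real (col_count n \<omega> j)) + real N * real n * p)"
    by (simp add: sum.distrib sum_distrib_left algebra_simps)
  also have "\<dots> = 576 * real N * real n * p * L + 24 * L * (T + real N * real n * p)"
    by (simp add: sum_col_count T_def)
  also have "\<dots> \<le> 576 * real N * real n * p * L + 24 * L * ((2 * (real n * real N * p) + 12 * L) + real N * real n * p)"
  proof -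
    have "T \<le> 2 * (real n * real N * p) + 12 * L"
      using assms by (simp add: good_pattern_def T_def L_def)
    thus ?thesis using L by (intro add_left_mono mult_left_mono add_right_mono) auto
  qed
  also have "\<dots> = 648 * real n * real N * p * L + 288 * L\<^sup>2"
    by (simp add: algebra_simps power2_eq_square)
  finally show ?thesis by (simp add: L_def)
qed

lemma ln_ge_half:
  assumes "2 \<le> N"
  shows "1/2 \<le> ln (real N)"
proof -
  have "ln 2 \<le> ln (real N)" using assms by simp
  thus ?thesis using ln2_ge_two_thirds by linarith
qed

lemma frobenius_bound_le_max_sq:
  fixes n N :: nat and p L S :: real
  assumes n: "1 \<le> n" and p: "0 < p" "p < 1" and L: "1/2 \<le> L"
    and S: "S \<le> 648 * real n * real N * p * L + 288 * L\<^sup>2"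
  shows "4 * S / (real n * (1 - p) ^ 4)
           \<le> (87 / (1 - p)\<^sup>2 * max (sqrt (sigma2 p * real N) * L) (L powr (3/2)))\<^sup>2"
proof -
  define q where "q = 1 - p"
  define M where "M = max (sqrt (sigma2 p * real N) * L) (L powr (3/2))"
  have q: "0 < q" using p by (simp add: q_def)
  have sigma: "p \<le> sigma2 p" using p by (simp add: sigma2_def field_simps)
  have M: "sigma2 p * real N * L\<^sup>2 \<le> M\<^sup>2" "L ^ 3 \<le> M\<^sup>2"
  proof -
    have "(sqrt (sigma2 p * real N) * L)\<^sup>2 \<le> M\<^sup>2" "(L powr (3/2))\<^sup>2 \<le> M\<^sup>2"
      unfolding M_def using p sigma L by (intro power_mono; simp)+
    moreover have "(L powr (3/2))\<^sup>2 = L ^ 3"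
      using L by (simp add: power2_eq_square powr_realpow flip: powr_add)
    ultimately show "sigma2 p * real N * L\<^sup>2 \<le> M\<^sup>2" "L ^ 3 \<le> M\<^sup>2"
      using p sigma by (simp_all add: power_mult_distrib)
  qed
  have "4 * S / (real n * q ^ 4) \<le> 4 * (648 * real n * real N * p * L + 288 * L\<^sup>2) / (real n * q ^ 4)"
    using S n q by (intro divide_right_mono) auto
  also have "\<dots> = (2592 * real N * p * L + 1152 * L\<^sup>2 / real n) / q ^ 4"
    using n by (simp add: field_simps)
  also have "\<dots> \<le> (2592 * real N * p * L + 1152 * L\<^sup>2) / q ^ 4"
    using n q by (intro divide_right_mono add_left_mono)
                 (auto simp: divide_le_eq mult_le_cancel_left1 mult_le_cancel_right1)
  also have "\<dots> \<le> (5184 * (sigma2 p * real N * L\<^sup>2) + 2304 * L ^ 3) / q ^ 4"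
  proof -
    have "real N * p * L \<le> real N * sigma2 p * (2 * L\<^sup>2)"
      using p sigma L by (intro mult_mono) (auto simp: power2_eq_square)
    moreover have "L\<^sup>2 \<le> 2 * L ^ 3"
      using L by (simp add: power2_eq_square power3_eq_cube mult_right_mono)
    ultimately show ?thesis using q by (intro divide_right_mono) (auto simp: algebra_simps)
  qed
  also have "\<dots> \<le> 7488 * M\<^sup>2 / q ^ 4"
    using M q by (intro divide_right_mono) auto
  also have "\<dots> \<le> (87 / q\<^sup>2 * M)\<^sup>2"
    using q by (simp add: power2_eq_square power4_eq_xxxx field_simps)
  finally show ?thesis by (simp add: q_def M_def)
qed

lemma spec_norm_le_on_good_pattern:
  assumes good: "good_pattern n N p \<omega>" and N: "2 \<le> N" and p: "0 < p" "p < 1"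
  shows "spec_norm n N (\<lambda>i j. matA p \<omega> i j - matAt n \<omega> i j)
           \<le> 87 / (1 - p)\<^sup>2 * max (sqrt (sigma2 p * real N) * ln (real N)) (ln (real N) powr (3/2))"
proof -
  define c where "c j = real (col_count n \<omega> j)" for j
  define S where "S = (\<Sum>j<N. (c j - real n * p)\<^sup>2)"
  have col: "c j < real n * p + real n * (1 - p) / 2" if "j < N" for j
    using good that by (simp add: good_pattern_def c_def)
  have n: "1 \<le> n"
  proof (rule ccontr)
    assume "\<not> 1 \<le> n"
    hence "n = 0" by simp
    thus False using col[of 0] N by (simp add: c_def)
  qed
  have "(\<Sum>i<n. \<Sum>j<N. (matA p \<omega> i j - matAt n \<omega> i j)\<^sup>2)
      \<le> (\<Sum>i<n. \<Sum>j<N. 4 * (c j - real n * p)\<^sup>2 / (real n ^ 2 * (1 - p) ^ 4))"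
    using col p unfolding c_def by (intro sum_mono matA_minus_matAt_sq_le) auto
  also have "\<dots> = real n * (4 * S / (real n ^ 2 * (1 - p) ^ 4))"
    by (simp add: S_def sum_divide_distrib sum_distrib_left)
  also have "\<dots> = 4 * S / (real n * (1 - p) ^ 4)"
    using n by (simp add: power2_eq_square)
  also have "\<dots> \<le> (87 / (1 - p)\<^sup>2 * max (sqrt (sigma2 p * real N) * ln (real N)) (ln (real N) powr (3/2)))\<^sup>2"
    using n p ln_ge_half[OF N] sum_col_deviation_sq_le[OF good] N
    by (intro frobenius_bound_le_max_sq) (auto simp: S_def c_def)
  finally have "sqrt (\<Sum>i<n. \<Sum>j<N. (matA p \<omega> i j - matAt n \<omega> i j)\<^sup>2)
      \<le> 87 / (1 - p)\<^sup>2 * max (sqrt (sigma2 p * real N) * ln (real N)) (ln (real N) powr (3/2))"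
    by (rule real_le_lsqrt[rotated]) (simp add: max.coboundedI2)
  thus ?thesis using spec_norm_le_frobenius by (rule order_trans[rotated])
qed

section \<open>Probability of the exceptional event\<close>

lemma exp_neg_le_powr:
  fixes x a y :: real
  assumes "0 < x" "a * ln x \<le> y"
  shows "exp (- y) \<le> x powr (- a)"
proof -
  have "exp (- y) \<le> exp (- a * ln x)" using assms(2) by simp
  also have "\<dots> = x powr (- a)" using assms(1) by (simp add: powr_def)
  finally show ?thesis .
qed

lemma prob_col_count_large:
  assumes j: "j < N" and p: "0 < p" "p < 1" and n: "1 \<le> n"
    and n_large: "96 * ln (real N) \<le> real n * (1 - p)\<^sup>2"
  shows "measure_pmf.prob (pattern_pmf n N p)
           {\<omega>. real n * p + real n * (1 - p) / 2 \<le> real (col_count n \<omega> j)} \<le> real N powr (-6)"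
proof -
  define q where "q = 1 - p"
  have q: "0 < q" "q < 1" using p by (auto simp: q_def)
  have "measure_pmf.prob (pattern_pmf n N p)
           {\<omega>. real n * p + real n * q / 2 \<le> real (col_count n \<omega> j)}
      = measure_pmf.prob (binomial_pmf n p) {k. real n * p + real n * q / 2 \<le> real k}"
    by (rule prob_col_count) (use j p in auto)
  also have "\<dots> \<le> exp (- min ((real n * q / 2)\<^sup>2 / (4 * (real n * p))) (real n * q / 2 / 2))"
    by (rule binomial_upper_tail) (use p n q in auto)
  also have "\<dots> \<le> real N powr (-6)"
  proof (rule exp_neg_le_powr)
    have "real n * q\<^sup>2 / 16 \<le> real n * q\<^sup>2 / (16 * p)"
      using p n q by (intro divide_left_mono) auto
    also have "\<dots> = (real n * q / 2)\<^sup>2 / (4 * (real n * p))"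
      using n p by (simp add: power2_eq_square field_simps)
    finally have "real n * q\<^sup>2 / 16 \<le> (real n * q / 2)\<^sup>2 / (4 * (real n * p))" .
    moreover have "real n * q\<^sup>2 / 16 \<le> real n * q / 2 / 2"
    proof -
      have "real n * q\<^sup>2 \<le> real n * q"
        using q by (intro mult_left_mono) (auto simp: power2_eq_square)
      thus ?thesis using q mult_nonneg_nonneg[of "real n" q] by linarith
    qed
    moreover have "6 * ln (real N) \<le> real n * q\<^sup>2 / 16"
      using n_large by (simp add: q_def)
    ultimately show "6 * ln (real N) \<le> min ((real n * q / 2)\<^sup>2 / (4 * (real n * p))) (real n * q / 2 / 2)"
      by linarith
  qed (use j in auto)
  finally show ?thesis by (simp add: q_def)
qed

lemma prob_col_count_deviation:
  assumes j: "j < N" and p: "0 < p" "p \<le> 1" and n: "1 \<le> n"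
  shows "measure_pmf.prob (pattern_pmf n N p)
           {\<omega>. 12 * (sqrt (real n * p * ln (real N)) + ln (real N))
                 \<le> \<bar>real (col_count n \<omega> j) - real n * p\<bar>} \<le> 2 * real N powr (-6)"
proof -
  define L where "L = ln (real N)"
  define t where "t = 12 * (sqrt (real n * p * L) + L)"
  define P where "P = measure_pmf.prob (pattern_pmf n N p)"
  have L: "0 \<le> L" using j by (simp add: L_def)
  have mu: "0 < real n * p" using n p by simp
  have "144 * (real n * p * L) \<le> t\<^sup>2"
  proof -
    have "(12 * sqrt (real n * p * L))\<^sup>2 \<le> t\<^sup>2"
      using L mu by (intro power_mono) (auto simp: t_def)
    thus ?thesis using L mu by (simp add: power_mult_distrib)
  qed
  hence "36 * L \<le> t\<^sup>2 / (4 * (real n * p))"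
    using mu by (simp add: field_simps)
  hence exponent: "6 * L \<le> min (t\<^sup>2 / (4 * (real n * p))) (t / 2)"
    using L mu by (simp add: t_def)
  have tail: "exp (- min (t\<^sup>2 / (4 * (real n * p))) (t / 2)) \<le> real N powr (-6)"
    by (rule exp_neg_le_powr) (use j exponent in \<open>auto simp: L_def\<close>)
  have upper: "P {\<omega>. real n * p + t \<le> real (col_count n \<omega> j)} \<le> real N powr (-6)"
  proof -
    have "P {\<omega>. real n * p + t \<le> real (col_count n \<omega> j)}
        = measure_pmf.prob (binomial_pmf n p) {k. real n * p + t \<le> real k}"
      unfolding P_def by (rule prob_col_count) (use j p in auto)
    also have "\<dots> \<le> exp (- min (t\<^sup>2 / (4 * (real n * p))) (t / 2))"
      by (rule binomial_upper_tail) (use p mu L in \<open>auto simp: t_def\<close>)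
    finally show ?thesis using tail by linarith
  qed
  have lower: "P {\<omega>. real (col_count n \<omega> j) \<le> real n * p - t} \<le> real N powr (-6)"
  proof -
    have "P {\<omega>. real (col_count n \<omega> j) \<le> real n * p - t}
        = measure_pmf.prob (binomial_pmf n p) {k. real k \<le> real n * p - t}"
      unfolding P_def by (rule prob_col_count) (use j p in auto)
    also have "\<dots> \<le> exp (- (t\<^sup>2 / (4 * (real n * p))))"
      by (rule binomial_lower_tail) (use p mu L in \<open>auto simp: t_def\<close>)
    also have "\<dots> \<le> exp (- min (t\<^sup>2 / (4 * (real n * p))) (t / 2))"
      by simp
    finally show ?thesis using tail by linarith
  qed
  have "{\<omega>. t \<le> \<bar>real (col_count n \<omega> j) - real n * p\<bar>}
      \<subseteq> {\<omega>. real n * p + t \<le> real (col_count n \<omega> j)} \<union> {\<omega>. real (col_count n \<omega> j) \<le> real n * p - t}"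
    by auto
  hence "P {\<omega>. t \<le> \<bar>real (col_count n \<omega> j) - real n * p\<bar>}
      \<le> P ({\<omega>. real n * p + t \<le> real (col_count n \<omega> j)} \<union> {\<omega>. real (col_count n \<omega> j) \<le> real n * p - t})"
    unfolding P_def by (rule measure_pmf.finite_measure_mono) auto
  also have "\<dots> \<le> P {\<omega>. real n * p + t \<le> real (col_count n \<omega> j)} + P {\<omega>. real (col_count n \<omega> j) \<le> real n * p - t}"
    unfolding P_def by (rule measure_Un_le) auto
  finally have "P {\<omega>. t \<le> \<bar>real (col_count n \<omega> j) - real n * p\<bar>} \<le> 2 * real N powr (-6)"
    using upper lower by linarith
  thus ?thesis by (simp add: P_def t_def L_def)
qed

lemma prob_card_pattern_large:
  assumes p: "0 < p" "p \<le> 1" and n: "1 \<le> n" and N: "1 \<le> N"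
  shows "measure_pmf.prob (pattern_pmf n N p)
           {\<omega>. 2 * (real n * real N * p) + 12 * ln (real N) \<le> real (card {x\<in>{..<n} \<times> {..<N}. \<omega> x})}
         \<le> real N powr (-6)"
proof -
  define L where "L = ln (real N)"
  define \<mu> where "\<mu> = real (n * N) * p"
  have L: "0 \<le> L" using N by (simp add: L_def)
  have mu: "0 < \<mu>" using n N p by (simp add: \<mu>_def)
  have "measure_pmf.prob (pattern_pmf n N p)
          {\<omega>. \<mu> + (\<mu> + 12 * L) \<le> real (card {x\<in>{..<n} \<times> {..<N}. \<omega> x})}
      = measure_pmf.prob (binomial_pmf (n * N) p) {k. \<mu> + (\<mu> + 12 * L) \<le> real k}"
    by (rule prob_card_pattern) (use p in auto)
  also have "\<dots> \<le> exp (- min ((\<mu> + 12 * L)\<^sup>2 / (4 * \<mu>)) ((\<mu> + 12 * L) / 2))"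
    unfolding \<mu>_def by (rule binomial_upper_tail) (use p mu L in \<open>auto simp: \<mu>_def\<close>)
  also have "\<dots> \<le> real N powr (-6)"
  proof (rule exp_neg_le_powr)
    have "4 * \<mu> * (12 * L) \<le> (\<mu> + 12 * L)\<^sup>2"
      using zero_le_power2[of "\<mu> - 12 * L"] by (simp add: power2_eq_square algebra_simps)
    hence "12 * L \<le> (\<mu> + 12 * L)\<^sup>2 / (4 * \<mu>)"
      using mu by (simp add: field_simps)
    thus "6 * ln (real N) \<le> min ((\<mu> + 12 * L)\<^sup>2 / (4 * \<mu>)) ((\<mu> + 12 * L) / 2)"
      using mu L by (simp add: L_def)
  qed (use N in auto)
  finally show ?thesis by (simp add: \<mu>_def L_def algebra_simps)
qed

lemma prob_not_good_pattern:
  assumes N: "1 \<le> N" and p: "0 < p" "p < 1" and n: "1 \<le> n"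
    and n_large: "96 * ln (real N) \<le> real n * (1 - p)\<^sup>2"
  shows "measure_pmf.prob (pattern_pmf n N p) {\<omega>. \<not> good_pattern n N p \<omega>} \<le> 4 * real N powr (-5)"
proof -
  define P where "P = measure_pmf.prob (pattern_pmf n N p)"
  define L where "L = ln (real N)"
  define E_large where "E_large j =
    {\<omega>. real n * p + real n * (1 - p) / 2 \<le> real (col_count n \<omega> j)}" for j
  define E_dev where "E_dev j =
    {\<omega>. 12 * (sqrt (real n * p * L) + L) \<le> \<bar>real (col_count n \<omega> j) - real n * p\<bar>}" for j
  define E_total where "E_total =
    {\<omega>. 2 * (real n * real N * p) + 12 * L \<le> real (card {x\<in>{..<n} \<times> {..<N}. \<omega> x})}"
  have "P {\<omega>. \<not> good_pattern n N p \<omega>} \<le> P ((\<Union>j<N. E_large j \<union> E_dev j) \<union> E_total)"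
    unfolding P_def
    by (rule measure_pmf.finite_measure_mono)
       (auto simp: good_pattern_def E_large_def E_dev_def E_total_def L_def not_less)
  also have "\<dots> \<le> (\<Sum>j<N. P (E_large j) + P (E_dev j)) + P E_total"
  proof -
    have "P (\<Union>j<N. E_large j \<union> E_dev j) \<le> (\<Sum>j<N. P (E_large j \<union> E_dev j))"
      unfolding P_def by (rule measure_UNION_le) auto
    also have "\<dots> \<le> (\<Sum>j<N. P (E_large j) + P (E_dev j))"
      unfolding P_def by (intro sum_mono measure_Un_le) auto
    moreover have "P ((\<Union>j<N. E_large j \<union> E_dev j) \<union> E_total) \<le> P (\<Union>j<N. E_large j \<union> E_dev j) + P E_total"
      unfolding P_def by (rule measure_Un_le) auto
    ultimately show ?thesis by linarith
  qed
  also have "\<dots> \<le> (\<Sum>j<N. real N powr (-6) + 2 * real N powr (-6)) + real N powr (-6)"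
    unfolding P_def E_large_def E_dev_def E_total_def L_def
    using prob_col_count_large[OF _ p n n_large] prob_col_count_deviation[OF _ _ _ n] prob_card_pattern_large[OF _ _ n N] p
    by (intro add_mono sum_mono) auto
  also have "\<dots> = (3 * real N + 1) * real N powr (-6)"
    by (simp add: algebra_simps)
  also have "\<dots> \<le> 4 * real N * real N powr (-6)"
    using N by (intro mult_right_mono) auto
  also have "\<dots> = 4 * real N powr (-5)"
    using N by (simp add: powr_mult_base)
  finally show ?thesis by (simp add: P_def)
qed

lemma prob_spec_norm_large:
  assumes N: "2 \<le> N" and p: "0 < p" "p < 1"
    and n_large: "96 * ln (real N) \<le> real n * (1 - p)\<^sup>2" and c1: "87 / (1 - p)\<^sup>2 < c1"
  shows "measure_pmf.prob (pattern_pmf n N p)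
           {\<omega>. spec_norm n N (\<lambda>i j. matA p \<omega> i j - matAt n \<omega> i j)
                 \<ge> c1 * max (sqrt (sigma2 p * real N) * ln (real N)) (ln (real N) powr (3/2))}
         \<le> 4 * real N powr (-5)"
proof -
  define M where "M = max (sqrt (sigma2 p * real N) * ln (real N)) (ln (real N) powr (3/2))"
  have L: "1/2 \<le> ln (real N)" using ln_ge_half[OF N] .
  have M: "0 < M" unfolding M_def using L by (simp add: max.strict_coboundedI2)
  have n: "1 \<le> n"
  proof (rule ccontr)
    assume "\<not> 1 \<le> n"
    hence "n = 0" by simp
    thus False using n_large L by simp
  qed
  have "{\<omega>. spec_norm n N (\<lambda>i j. matA p \<omega> i j - matAt n \<omega> i j) \<ge> c1 * M}
      \<subseteq> {\<omega>. \<not> good_pattern n N p \<omega>}"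
  proof (intro subsetI CollectI notI)
    fix \<omega> assume "\<omega> \<in> {\<omega>. spec_norm n N (\<lambda>i j. matA p \<omega> i j - matAt n \<omega> i j) \<ge> c1 * M}"
      and "good_pattern n N p \<omega>"
    moreover have "87 / (1 - p)\<^sup>2 * M < c1 * M" using c1 M by (rule mult_strict_right_mono)
    ultimately show False
      using spec_norm_le_on_good_pattern[OF _ N p] by (fastforce simp: M_def)
  qed
  hence "measure_pmf.prob (pattern_pmf n N p)
           {\<omega>. spec_norm n N (\<lambda>i j. matA p \<omega> i j - matAt n \<omega> i j) \<ge> c1 * M}
         \<le> measure_pmf.prob (pattern_pmf n N p) {\<omega>. \<not> good_pattern n N p \<omega>}"
    by (rule measure_pmf.finite_measure_mono) simp
  also have "\<dots> \<le> 4 * real N powr (-5)"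
    using N p n n_large by (intro prob_not_good_pattern) auto
  finally show ?thesis by (simp add: M_def)
qed

theorem lemma5:
  fixes p0 :: real
  assumes "p0 < 1"
  shows "\<exists>C0. \<exists>c1 c2. c1 > 0 \<and> c2 > 0 \<and>
    (\<forall>N n :: nat. \<forall>p :: real.
       1 \<le> N \<longrightarrow> n \<le> N \<longrightarrow> 0 < p \<longrightarrow> p \<le> p0 \<longrightarrow> real n \<ge> C0 * ln (real N) \<longrightarrow>
       measure_pmf.prob (pattern_pmf n N p)
         {\<omega>. spec_norm n N (\<lambda>i j. matA p \<omega> i j - matAt n \<omega> i j)
               \<ge> c1 * max (sqrt (sigma2 p * real N) * ln (real N)) (ln (real N) powr (3/2))}
       \<le> c2 * real N powr (-5))"
proof -
  define q0 where "q0 = 1 - p0"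
  have q0: "0 < q0" using assms by (simp add: q0_def)
  have bound: "measure_pmf.prob (pattern_pmf n N p)
         {\<omega>. spec_norm n N (\<lambda>i j. matA p \<omega> i j - matAt n \<omega> i j)
               \<ge> 100 / q0\<^sup>2 * max (sqrt (sigma2 p * real N) * ln (real N)) (ln (real N) powr (3/2))}
       \<le> 4 * real N powr (-5)"
    if N: "1 \<le> N" and "0 < p" "p \<le> p0" and n: "96 / q0\<^sup>2 * ln (real N) \<le> real n"
    for N n :: nat and p :: real
  proof (cases "N = 1")
    case True
    thus ?thesis by (simp add: order_trans[OF measure_pmf.prob_le_1])
  next
    case False
    have p: "0 < p" "p < 1" and q0_le: "q0\<^sup>2 \<le> (1 - p)\<^sup>2"
      using \<open>0 < p\<close> \<open>p \<le> p0\<close> assms q0 by (auto simp: q0_def intro: power_mono)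
    have "96 * ln (real N) \<le> real n * q0\<^sup>2" using n q0 by (simp add: field_simps)
    also have "\<dots> \<le> real n * (1 - p)\<^sup>2" using q0_le by (simp add: mult_left_mono)
    finally have "96 * ln (real N) \<le> real n * (1 - p)\<^sup>2" .
    moreover have "87 / (1 - p)\<^sup>2 < 100 / q0\<^sup>2"
    proof -
      have "87 / (1 - p)\<^sup>2 \<le> 87 / q0\<^sup>2" using q0 q0_le p by (intro divide_left_mono) auto
      also have "\<dots> < 100 / q0\<^sup>2" using q0 by (simp add: divide_strict_right_mono)
      finally show ?thesis .
    qed
    ultimately show ?thesis using N False p by (intro prob_spec_norm_large) auto
  qed
  show ?thesis
    by (intro exI[of _ "96 / q0\<^sup>2"] exI[of _ "100 / q0\<^sup>2"] exI[of _ 4]) (use q0 bound in auto)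
qed

end
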